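(* In the manifold decomposition game, the Grundy value of the position consisting of the single surface $og$ is $G(o0)=0$, $G(o1)=1$, and for $g\ge 2$, $G(og)=2$ if $g$ is even and $G(og)=0$ if $g$ is odd. (In the paper's notation, the $G$-series of $og$ is $01\dot{2}\dot{0}$.)
   Context: Notation: $og$ is the closed orientable surface of genus $g$ (connected sum of $g$ tori), with $o0$ the sphere. The manifold decomposition game: a position is a finite disjoint union of compact connected surfaces without boundary. Two players alternate moves. A move consists of choosing one component $S$ and performing a proper decomposition of it: choose an essential simple closed curve $J$ on $S$ (not null-homotopic, equivalently not bounding a disk in $S$), take a tubular neighborhood of $J$ (an annulus or a Möbius band), remove its interior, and cap off each resulting boundary circle with a disk; $S$ is replaced by the resulting one or two surfaces. The game ends when every component is a sphere, and the last player able to move wins. The Grundy value $G$ of a position is defined recursively: a position with no moves has value $0$, and otherwise the value is the minimal excluded nonnegative integer (mex) of the values of positions reachable in one move. The $G$-series lists $G(o0),G(o1),G(o2),\dots$; dots over digits indicate a repeating block. *)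

theory Defs
  imports Main "HOL-Library.Multiset"
begin

text \<open>Every component reachable from the orientable surface of genus g is a closed
orientable surface, determined up to homeomorphism by its genus; a position is therefore
a finite multiset of genera (genus 0 = sphere).  Proper decompositions of the genus-g
component: cutting along a non-separating essential curve yields genus g-1 (needs g >= 1);
cutting along a separating essential curve yields genera a and g-a with 1 <= a < g.\<close>

definition moves :: "nat multiset \<Rightarrow> nat multiset set" where
  "moves P =
     {P - {#g#} + {#g - 1#} | g. g \<in># P \<and> 1 \<le> g}
   \<union> {P - {#g#} + {#a, g - a#} | g a. g \<in># P \<and> 1 \<le> a \<and> a < g}"

definition mex :: "nat set \<Rightarrow> nat" where
  "mex A = (LEAST n. n \<notin> A)"

definition gw :: "nat \<Rightarrow> nat" where
  "gw g = (if g = 0 then 0 else 2 * g - 1)"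

definition gweight :: "nat multiset \<Rightarrow> nat" where
  "gweight P = sum_mset (image_mset gw P)"

lemma gweight_add_mset: "gweight (add_mset g M) = gw g + gweight M"
  by (simp add: gweight_def)

lemma gweight_plus: "gweight (M + N) = gweight M + gweight N"
  by (simp add: gweight_def)

lemma gweight_remove_add:
  assumes "g \<in># P"
  shows "gweight (P - {#g#} + Q) + gw g = gweight P + gweight Q"
proof -
  have "P = add_mset g (P - {#g#})" using assms by simp
  then have "gweight P = gweight (P - {#g#}) + gw g"
    by (metis gweight_add_mset add.commute)
  then show ?thesis by (simp add: gweight_plus)
qed

lemma moves_decrease: "Q \<in> moves P \<Longrightarrow> gweight Q < gweight P"
proof -
  assume "Q \<in> moves P"
  then consider (a) g where "g \<in># P" "1 \<le> g" "Q = P - {#g#} + {#g - 1#}"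
    | (b) g a where "g \<in># P" "1 \<le> a" "a < g" "Q = P - {#g#} + {#a, g - a#}"
    unfolding moves_def by blast
  then show ?thesis
  proof cases
    case a
    have "gweight {#g - 1#} < gw g"
      using a by (simp add: gweight_def gw_def) arith
    then show ?thesis using gweight_remove_add[OF a(1), of "{#g - 1#}"] unfolding a(3) by linarith
  next
    case b
    have "gweight {#a, g - a#} < gw g"
      using b by (simp add: gweight_def gw_def)
    then show ?thesis using gweight_remove_add[OF b(1), of "{#a, g - a#}"] unfolding b(4) by linarith
  qed
qed

function grundy :: "nat multiset \<Rightarrow> nat" where
  "grundy P = mex ((\<lambda>Q. grundy Q) ` moves P)"
  by auto
termination
  by (relation "measure gweight") (auto intro: moves_decrease)

end

theory Submission
  imports Defs
begin

text \<open>Only two parities matter: that of the number of tori and that of the number of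
components of positive even genus.  Every move flips at least one of them: compressing a
torus flips the first, and every other cut changes the number of even-genus components by
exactly one.  Conversely, an odd number of tori lets one flip the first parity alone, and an
odd number of even-genus components lets one flip the second parity while setting the first
at will.  So by the mex recursion the Grundy value of a position is
[odd number of tori] + 2 [odd number of even-genus components].\<close>

lemma mex_eqI:
  assumes "n \<notin> A" and "{..<n} \<subseteq> A"
  shows "mex A = n"
  unfolding mex_def using assms by (intro Least_equality) (auto simp: not_less[symmetric])

declare grundy.simps [simp del]

lemma grundy_eqI:
  assumes "\<And>P. f P \<notin> f ` moves P" and "\<And>P. {..<f P} \<subseteq> f ` moves P"
  shows "grundy P = f P"
proof (induction P rule: measure_induct_rule[of gweight])
  case (less P)
  have "grundy ` moves P = f ` moves P"
    using less.IH moves_decrease by (intro image_cong) auto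
  then show ?case
    by (subst grundy.simps) (simp add: mex_eqI assms)
qed

definition cuts :: "nat \<Rightarrow> nat multiset set" where
  "cuts g = (if g = 0 then {} else {{#g - 1#}}) \<union> {{#a, g - a#} | a. 1 \<le> a \<and> a < g}"

lemma nonseparating_cut: "1 \<le> g \<Longrightarrow> {#g - 1#} \<in> cuts g"
  by (simp add: cuts_def)

lemma separating_cut: "1 \<le> a \<Longrightarrow> a < g \<Longrightarrow> {#a, g - a#} \<in> cuts g"
  by (auto simp: cuts_def)

lemma cutsE:
  assumes "R \<in> cuts g"
  obtains "1 \<le> g" "R = {#g - 1#}" | a where "1 \<le> a" "a < g" "R = {#a, g - a#}"
  using assms unfolding cuts_def by (auto split: if_splits)

lemma moves_iff_cuts:
  "Q \<in> moves P \<longleftrightarrow> (\<exists>g P' R. P = add_mset g P' \<and> R \<in> cuts g \<and> Q = P' + R)"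
proof
  assume "Q \<in> moves P"
  then obtain g R where "g \<in># P" "R \<in> cuts g" "Q = P - {#g#} + R"
    unfolding moves_def by (blast intro: nonseparating_cut separating_cut)
  then show "\<exists>g P' R. P = add_mset g P' \<and> R \<in> cuts g \<and> Q = P' + R"
    by (metis insert_DiffM)
next
  assume "\<exists>g P' R. P = add_mset g P' \<and> R \<in> cuts g \<and> Q = P' + R"
  then obtain g P' R where P: "P = add_mset g P'" and R: "R \<in> cuts g" and Q: "Q = P' + R"
    by blast
  have "g \<in># P" and "Q = P - {#g#} + R"
    using P Q by simp_all
  with R show "Q \<in> moves P"
    unfolding moves_def by (elim cutsE) blast+
qed

lemma cut_move: "R \<in> cuts g \<Longrightarrow> P + R \<in> moves (add_mset g P)"
  unfolding moves_iff_cuts by blast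

definition torus_count :: "nat multiset \<Rightarrow> nat" where
  "torus_count P = count P 1"

definition even_genus_count :: "nat multiset \<Rightarrow> nat" where
  "even_genus_count P = size (filter_mset (\<lambda>g. even g \<and> g \<noteq> 0) P)"

lemma torus_count_simps [simp]:
  "torus_count {#} = 0"
  "torus_count (add_mset g P) = of_bool (g = 1) + torus_count P"
  "torus_count (P + Q) = torus_count P + torus_count Q"
  by (simp_all add: torus_count_def)

lemma even_genus_count_simps [simp]:
  "even_genus_count {#} = 0"
  "even_genus_count (add_mset g P) = of_bool (even g \<and> g \<noteq> 0) + even_genus_count P"
  "even_genus_count (P + Q) = even_genus_count P + even_genus_count Q"
  by (simp_all add: even_genus_count_def)

lemma cut_flips_parity:
  assumes "R \<in> cuts g"
  shows "odd (torus_count {#g#} + torus_count R) \<or> odd (even_genus_count {#g#} + even_genus_count R)"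
  using assms
proof (cases rule: cutsE)
  case 1
  then show ?thesis by (cases "g = 1") auto
next
  case (2 a)
  then have "odd (even_genus_count {#g#} + even_genus_count R)"
    by (cases "even g"; cases "even a") auto
  then show ?thesis ..
qed

definition parity_value :: "nat multiset \<Rightarrow> nat" where
  "parity_value P = of_bool (odd (torus_count P)) + 2 * of_bool (odd (even_genus_count P))"

lemma parity_value_eq_iff:
  "parity_value P = parity_value Q \<longleftrightarrow>
     (odd (torus_count P) \<longleftrightarrow> odd (torus_count Q)) \<and>
     (odd (even_genus_count P) \<longleftrightarrow> odd (even_genus_count Q))"
  by (auto simp: parity_value_def)

lemma parity_value_notin_moves: "parity_value P \<notin> parity_value ` moves P"
proof
  assume "parity_value P \<in> parity_value ` moves P"
  then obtain Q where "Q \<in> moves P" and same: "parity_value Q = parity_value P"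
    by auto
  then obtain g P' R where "P = add_mset g P'" "R \<in> cuts g" "Q = P' + R"
    by (auto simp: moves_iff_cuts)
  then show False
    using same cut_flips_parity[of R g] by (auto simp: parity_value_eq_iff)
qed

lemma torus_move_value:
  assumes "odd (torus_count P)"
  shows "parity_value P - 1 \<in> parity_value ` moves P"
proof -
  have "1 \<in># P"
    using assms by (metis count_eq_zero_iff even_zero torus_count_def)
  then obtain P' where P: "P = add_mset 1 P'"
    by (metis insert_DiffM)
  have "P' + {#0#} \<in> moves P"
    using cut_move[OF nonseparating_cut[of 1]] by (simp add: P)
  moreover have "parity_value (P' + {#0#}) = parity_value P - 1"
    using assms by (simp add: P parity_value_def)
  ultimately show ?thesis
    by (metis image_eqI)
qed

lemma even_genus_cut:
  assumes "even g" and "g \<noteq> 0"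
  shows "\<exists>R \<in> cuts g. even_genus_count R = 0 \<and> odd (torus_count R) = b"
proof (cases "g = 2")
  case True
  then show ?thesis
    using nonseparating_cut[of 2] separating_cut[of 1 2] by (cases b) force+
next
  case False
  with assms have "4 \<le> g"
    by presburger
  show ?thesis
  proof (cases b)
    case True
    with assms \<open>4 \<le> g\<close> show ?thesis
      by (intro bexI[OF _ separating_cut[of 1 g]]) auto
  next
    case False
    with assms \<open>4 \<le> g\<close> show ?thesis
      by (intro bexI[OF _ nonseparating_cut[of g]]) auto
  qed
qed

lemma even_genus_move_values:
  assumes "odd (even_genus_count P)"
  shows "{0, 1} \<subseteq> parity_value ` moves P"
proof -
  have "filter_mset (\<lambda>g. even g \<and> g \<noteq> 0) P \<noteq> {#}"
    using assms unfolding even_genus_count_def by (metis even_zero size_empty)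
  then obtain g where "g \<in># filter_mset (\<lambda>g. even g \<and> g \<noteq> 0) P"
    by (rule multiset_nonemptyE)
  then have g: "g \<in># P" "even g" "g \<noteq> 0"
    by simp_all
  then obtain P' where P: "P = add_mset g P'"
    by (metis insert_DiffM)
  have "n \<in> parity_value ` moves P" if "n \<le> 1" for n
  proof -
    obtain R where R: "R \<in> cuts g" "even_genus_count R = 0"
      and "odd (torus_count R) \<longleftrightarrow> (odd (torus_count P') \<longleftrightarrow> n = 0)"
      using even_genus_cut[OF g(2,3)] by blast
    then have "parity_value (P' + R) = n"
      using assms g \<open>n \<le> 1\<close> by (auto simp: P parity_value_def)
    moreover have "P' + R \<in> moves P"
      using cut_move[OF R(1)] by (simp add: P)
    ultimately show ?thesis
      by (metis image_eqI)
  qed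
  then show ?thesis
    by auto
qed

lemma parity_value_lower_reachable: "{..<parity_value P} \<subseteq> parity_value ` moves P"
  using torus_move_value[of P] even_genus_move_values[of P]
  by (cases "odd (torus_count P)"; cases "odd (even_genus_count P)")
    (auto simp: parity_value_def less_Suc_eq numeral_eq_Suc)

lemma grundy_eq_parity_value: "grundy P = parity_value P"
  by (rule grundy_eqI[OF parity_value_notin_moves parity_value_lower_reachable])

theorem theorem2p3:
  shows "grundy {#0#} = 0 \<and> grundy {#1#} = 1 \<and>
         (\<forall>g::nat. g \<ge> 2 \<longrightarrow> grundy {#g#} = (if even g then 2 else 0))"
  by (auto simp: grundy_eq_parity_value parity_value_def)

end
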